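(* Let $b>0$ and let $F,x_0,x_\infty,\mathbb{S}_2$ be as in the context. For any $(x,y)\in\mathbb{S}_2$ there exists a unique solution $z=z(x,y)$ of $y-z=F(x-\alpha z)$. Moreover $z(x,y)\in\big(\frac{x-x_0}{\alpha},\frac{x-x_\infty}{\alpha}\wedge y\big]$, $z(x,F(x))=0$ for every $x\in(x_\infty,x_0)$, and $z(x,y)=\frac{x-x_0}{\alpha}$ for every $(x,y)\in\mathbb{R}\times(0,\infty)$ with $x\ge x_0$ and $y=\frac{x-x_0}{\alpha}$.
   Context: Constants: $a\in\mathbb{R}$, $b>0$, $\sigma>0$, $\rho>0$, $c>0$, $\alpha>0$. $\psi(x)=e^{\frac{(bx-a)^2}{2\sigma^2 b}}D_{-\rho/b}\big(-\frac{bx-a}{\sigma b}\sqrt{2b}\big)$ with $D_\beta(x)=\frac{e^{-x^2/4}}{\Gamma(-\beta)}\int_0^\infty t^{-\beta-1}e^{-t^2/2-xt}dt$ ($\beta<0$); $\psi$ is the positive strictly increasing fundamental solution of $\frac12\sigma^2u''+(a-bx)u'-\rho u=0$. $x_0$ (resp. $x_\infty$) is the unique solution on $(c,\infty)$ of $(x-c)\psi'(x)-\psi(x)=0$ (resp. $(x-c)\psi''(x)-\psi'(x)=0$); $c<x_\infty<x_0$. For $x\in(x_\infty,x_0]$, $F(x)=\int_x^{x_0}\Theta(z)dz$ with $\Theta(z)=\frac{[\psi'''(z)((z-c)\psi'(z)-\psi(z))-\psi''(z)((z-c)\psi''(z)-\psi'(z))]\psi(z)}{-\alpha[\psi''(z)\psi(z)-\psi'(z)^2][(z-c)\psi''(z)-\psi'(z)]}$;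 $F$ is a strictly decreasing continuous bijection of $(x_\infty,x_0]$ onto $[0,\infty)$ with $F(x_0)=0$, and $F^{-1}$ denotes its inverse. $\mathbb{S}_2=\{(x,y)\in\mathbb{R}\times(0,\infty):x\ge F^{-1}(y),\ y>(x-x_0)/\alpha\}$. *)

theory Defs
  imports "HOL-Analysis.Analysis"
begin

text \<open>Parabolic cylinder function D_beta (integral representation, meant for beta < 0).\<close>
definition Dpc :: "real \<Rightarrow> real \<Rightarrow> real" where
  "Dpc \<beta> x = exp (- (x^2) / 4) / Gamma (- \<beta>) *
      integral {0<..} (\<lambda>t. t powr (- \<beta> - 1) * exp (- (t^2) / 2 - x * t))"

definition psi :: "real \<Rightarrow> real \<Rightarrow> real \<Rightarrow> real \<Rightarrow> real \<Rightarrow> real" where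
  "psi a b \<sigma> \<rho> x = exp ((b * x - a)^2 / (2 * \<sigma>^2 * b)) *
      Dpc (- \<rho> / b) (- (b * x - a) / (\<sigma> * b) * sqrt (2 * b))"

definition dpsi :: "nat \<Rightarrow> real \<Rightarrow> real \<Rightarrow> real \<Rightarrow> real \<Rightarrow> real \<Rightarrow> real" where
  "dpsi k a b \<sigma> \<rho> = (deriv ^^ k) (psi a b \<sigma> \<rho>)"

definition x0 :: "real \<Rightarrow> real \<Rightarrow> real \<Rightarrow> real \<Rightarrow> real \<Rightarrow> real" where
  "x0 a b \<sigma> \<rho> c = (THE x. c < x \<and>
      (x - c) * dpsi 1 a b \<sigma> \<rho> x - dpsi 0 a b \<sigma> \<rho> x = 0)"

definition xinf :: "real \<Rightarrow> real \<Rightarrow> real \<Rightarrow> real \<Rightarrow> real \<Rightarrow> real" where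
  "xinf a b \<sigma> \<rho> c = (THE x. c < x \<and>
      (x - c) * dpsi 2 a b \<sigma> \<rho> x - dpsi 1 a b \<sigma> \<rho> x = 0)"

definition Theta :: "real \<Rightarrow> real \<Rightarrow> real \<Rightarrow> real \<Rightarrow> real \<Rightarrow> real \<Rightarrow> real \<Rightarrow> real" where
  "Theta a b \<sigma> \<rho> c \<alpha> z =
     (let p0 = dpsi 0 a b \<sigma> \<rho> z; p1 = dpsi 1 a b \<sigma> \<rho> z;
          p2 = dpsi 2 a b \<sigma> \<rho> z; p3 = dpsi 3 a b \<sigma> \<rho> z in
      ((p3 * ((z - c) * p1 - p0) - p2 * ((z - c) * p2 - p1)) * p0) /
      (- \<alpha> * (p2 * p0 - p1^2) * ((z - c) * p2 - p1)))"

text \<open>F(x) = integral from x to x0 of Theta; meaningful for x in (xinf, x0].\<close>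
definition FF :: "real \<Rightarrow> real \<Rightarrow> real \<Rightarrow> real \<Rightarrow> real \<Rightarrow> real \<Rightarrow> real \<Rightarrow> real" where
  "FF a b \<sigma> \<rho> c \<alpha> x = integral {x .. x0 a b \<sigma> \<rho> c} (Theta a b \<sigma> \<rho> c \<alpha>)"

definition Finv :: "real \<Rightarrow> real \<Rightarrow> real \<Rightarrow> real \<Rightarrow> real \<Rightarrow> real \<Rightarrow> real \<Rightarrow> real" where
  "Finv a b \<sigma> \<rho> c \<alpha> y =
     inv_into {xinf a b \<sigma> \<rho> c <.. x0 a b \<sigma> \<rho> c} (FF a b \<sigma> \<rho> c \<alpha>) y"

definition S2 :: "real \<Rightarrow> real \<Rightarrow> real \<Rightarrow> real \<Rightarrow> real \<Rightarrow> real \<Rightarrow> (real \<times> real) set" where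
  "S2 a b \<sigma> \<rho> c \<alpha> = {(x, y). 0 < y \<and> x \<ge> Finv a b \<sigma> \<rho> c \<alpha> y \<and>
       y > (x - x0 a b \<sigma> \<rho> c) / \<alpha>}"

definition is_zsol :: "real \<Rightarrow> real \<Rightarrow> real \<Rightarrow> real \<Rightarrow> real \<Rightarrow> real \<Rightarrow> real \<Rightarrow> real \<Rightarrow> real \<Rightarrow> bool" where
  "is_zsol a b \<sigma> \<rho> c \<alpha> x y z \<longleftrightarrow>
     x - \<alpha> * z \<in> {xinf a b \<sigma> \<rho> c <.. x0 a b \<sigma> \<rho> c} \<and>
     y - z = FF a b \<sigma> \<rho> c \<alpha> (x - \<alpha> * z)"

definition zfun :: "real \<Rightarrow> real \<Rightarrow> real \<Rightarrow> real \<Rightarrow> real \<Rightarrow> real \<Rightarrow> real \<Rightarrow> real \<Rightarrow> real" where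
  "zfun a b \<sigma> \<rho> c \<alpha> x y = (THE z. is_zsol a b \<sigma> \<rho> c \<alpha> x y z)"

end

theory Submission
  imports Defs
begin

text \<open>Since \<open>F\<close> is strictly decreasing and \<open>\<alpha> > 0\<close>, the map \<open>w \<mapsto> w + F(x - \<alpha> w)\<close> is
  strictly increasing, so \<open>y - w = F(x - \<alpha> w)\<close> has at most one solution. As \<open>F(x\<^sub>0) = 0\<close>,
  the defect \<open>y - w - F(x - \<alpha> w)\<close> is positive at \<open>w = (x - x\<^sub>0)/\<alpha>\<close> and equals \<open>-w \<le> 0\<close> at
  \<open>w = (x - F\<^sup>-\<^sup>1(y))/\<alpha>\<close>, so the intermediate value theorem gives a solution in between.
  The bounds on it come from \<open>F \<ge> 0\<close> and from \<open>x - \<alpha> w\<close> lying in \<open>(x\<^sub>\<infinity>, x\<^sub>0]\<close>.\<close>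

definition shift_solution :: "(real \<Rightarrow> real) \<Rightarrow> real set \<Rightarrow> real \<Rightarrow> real \<Rightarrow> real \<Rightarrow> real \<Rightarrow> bool"
  where "shift_solution F S \<alpha> x y w \<longleftrightarrow> x - \<alpha> * w \<in> S \<and> y - w = F (x - \<alpha> * w)"

lemma is_zsol_iff_shift_solution:
  "is_zsol a b \<sigma> \<rho> c \<alpha> x y w \<longleftrightarrow>
     shift_solution (FF a b \<sigma> \<rho> c \<alpha>) {xinf a b \<sigma> \<rho> c <.. x0 a b \<sigma> \<rho> c} \<alpha> x y w"
  unfolding is_zsol_def shift_solution_def ..

lemma strict_antimono_bij_nonneg_right_end_eq_0:
  fixes F :: "real \<Rightarrow> real"
  assumes "strict_antimono_on {l<..r} F" and "l < r" and "bij_betw F {l<..r} {0..}"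
  shows "F r = 0"
proof -
  have r: "r \<in> {l<..r}" using \<open>l < r\<close> by simp
  obtain u where u: "u \<in> {l<..r}" "F u = 0"
    using assms(3) unfolding bij_betw_def by force
  have "F r \<le> F u"
    using u r assms(1) unfolding monotone_on_def by (metis greaterThanAtMost_iff less_eq_real_def)
  moreover have "F r \<ge> 0" using r assms(3) unfolding bij_betw_def by auto
  ultimately show ?thesis using u by simp
qed

lemma shift_solution_unique:
  fixes F :: "real \<Rightarrow> real"
  assumes "strict_antimono_on S F" and "\<alpha> > 0"
    and "shift_solution F S \<alpha> x y w\<^sub>1" and "shift_solution F S \<alpha> x y w\<^sub>2"
  shows "w\<^sub>1 = w\<^sub>2"
proof -
  have False if "shift_solution F S \<alpha> x y v\<^sub>1" "shift_solution F S \<alpha> x y v\<^sub>2" "v\<^sub>1 < v\<^sub>2"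
    for v\<^sub>1 v\<^sub>2
  proof -
    have "x - \<alpha> * v\<^sub>2 < x - \<alpha> * v\<^sub>1" using \<open>v\<^sub>1 < v\<^sub>2\<close> \<open>\<alpha> > 0\<close> by simp
    then have "F (x - \<alpha> * v\<^sub>1) < F (x - \<alpha> * v\<^sub>2)"
      using assms(1) that(1,2) unfolding shift_solution_def monotone_on_def by blast
    then show False using that unfolding shift_solution_def by linarith
  qed
  then show ?thesis using assms(3,4) by (meson linorder_neqE_linordered_idom)
qed

lemma shift_solution_exists:
  fixes F :: "real \<Rightarrow> real"
  assumes "continuous_on {l<..r} F" and "F r = 0" and "\<alpha> > 0"
    and "u \<in> {l<..r}" and "F u = y" and "u \<le> x" and "(x - r) / \<alpha> \<le> y"
  shows "\<exists>w. shift_solution F {l<..r} \<alpha> x y w"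
proof -
  define lo where "lo = (x - r) / \<alpha>"
  define hi where "hi = (x - u) / \<alpha>"
  define defect where "defect w = y - w - F (x - \<alpha> * w)" for w
  have x_lo: "x - \<alpha> * lo = r" and x_hi: "x - \<alpha> * hi = u"
    unfolding lo_def hi_def using \<open>\<alpha> > 0\<close> by simp_all
  have "lo \<le> hi" unfolding lo_def hi_def using assms(3,4) by (simp add: divide_right_mono)
  have dom: "l < x - \<alpha> * w" "x - \<alpha> * w \<le> r" if "lo \<le> w" "w \<le> hi" for w
  proof -
    have "\<alpha> * lo \<le> \<alpha> * w" "\<alpha> * w \<le> \<alpha> * hi" using that \<open>\<alpha> > 0\<close> by simp_all
    then show "l < x - \<alpha> * w" "x - \<alpha> * w \<le> r" using x_lo x_hi assms(4) by auto
  qed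
  have "continuous_on {lo..hi} defect"
    unfolding defect_def
    by (intro continuous_intros continuous_on_compose2[OF assms(1)]) (auto simp: dom)
  moreover have "defect hi \<le> 0"
    unfolding defect_def x_hi hi_def using assms(3,5,6) by simp
  moreover have "0 \<le> defect lo"
    unfolding defect_def x_lo lo_def using assms(2,3,7) by simp
  ultimately obtain w where "w \<in> {lo..hi}" "defect w = 0"
    using IVT2'[of defect hi 0 lo] \<open>lo \<le> hi\<close> by auto
  then have "shift_solution F {l<..r} \<alpha> x y w"
    unfolding shift_solution_def defect_def using dom by simp
  then show ?thesis ..
qed

lemma shift_solution_bounds:
  fixes F :: "real \<Rightarrow> real"
  assumes "\<forall>u\<in>{l<..r}. F u \<ge> 0" and "F r = 0" and "\<alpha> > 0" and "(x - r) / \<alpha> < y"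
    and "shift_solution F {l<..r} \<alpha> x y w"
  shows "w \<in> {(x - r) / \<alpha> <.. min ((x - l) / \<alpha>) y}"
proof -
  have dom: "l < x - \<alpha> * w" "x - \<alpha> * w \<le> r" and eq: "y - w = F (x - \<alpha> * w)"
    using assms(5) unfolding shift_solution_def by auto
  have "(x - r) / \<alpha> \<le> w" "w < (x - l) / \<alpha>"
    using dom \<open>\<alpha> > 0\<close> by (simp_all add: field_simps)
  moreover have "w \<noteq> (x - r) / \<alpha>"
  proof
    assume "w = (x - r) / \<alpha>"
    then have "y - w = F r" using eq \<open>\<alpha> > 0\<close> by simp
    then show False using assms(2,4) \<open>w = (x - r) / \<alpha>\<close> by simp
  qed
  moreover have "w \<le> y" using assms(1) dom eq by force
  ultimately show ?thesis by simp
qed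

lemma zfun_eqI:
  assumes "strict_antimono_on {xinf a b \<sigma> \<rho> c <.. x0 a b \<sigma> \<rho> c} (FF a b \<sigma> \<rho> c \<alpha>)"
    and "\<alpha> > 0" and "is_zsol a b \<sigma> \<rho> c \<alpha> x y w"
  shows "zfun a b \<sigma> \<rho> c \<alpha> x y = w"
  unfolding zfun_def
proof (rule the_equality)
  show "is_zsol a b \<sigma> \<rho> c \<alpha> x y w" by fact
  show "v = w" if "is_zsol a b \<sigma> \<rho> c \<alpha> x y v" for v
    using shift_solution_unique[OF assms(1,2)] that assms(3)
    unfolding is_zsol_iff_shift_solution by blast
qed

theorem lemma4p9:
  fixes a b \<sigma> \<rho> c \<alpha> :: real
  defines "X0 \<equiv> x0 a b \<sigma> \<rho> c" and "XI \<equiv> xinf a b \<sigma> \<rho> c"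
      and "F \<equiv> FF a b \<sigma> \<rho> c \<alpha>" and "z \<equiv> zfun a b \<sigma> \<rho> c \<alpha>"
  assumes "b > 0" and "\<sigma> > 0" and "\<rho> > 0" and "c > 0" and "\<alpha> > 0"
    and "\<exists>!x. c < x \<and> (x - c) * dpsi 1 a b \<sigma> \<rho> x - dpsi 0 a b \<sigma> \<rho> x = 0"
    and "\<exists>!x. c < x \<and> (x - c) * dpsi 2 a b \<sigma> \<rho> x - dpsi 1 a b \<sigma> \<rho> x = 0"
    and "c < XI" and "XI < X0"
    and "\<forall>u\<in>{XI<..X0}. \<forall>v\<in>{XI<..X0}. u < v \<longrightarrow> F v < F u"
    and "continuous_on {XI<..X0} F"
    and "bij_betw F {XI<..X0} {0..}"
  shows "(\<forall>(x, y) \<in> S2 a b \<sigma> \<rho> c \<alpha>.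
            (\<exists>!w. is_zsol a b \<sigma> \<rho> c \<alpha> x y w) \<and>
            z x y \<in> {(x - X0) / \<alpha> <.. min ((x - XI) / \<alpha>) y})
       \<and> (\<forall>x\<in>{XI<..<X0}. z x (F x) = 0)
       \<and> (\<forall>x y. 0 < y \<and> x \<ge> X0 \<and> y = (x - X0) / \<alpha> \<longrightarrow> z x y = (x - X0) / \<alpha>)"
proof -
  have mono: "strict_antimono_on {XI<..X0} F" using assms(14) by (simp add: monotone_on_def)
  have zsol: "is_zsol a b \<sigma> \<rho> c \<alpha> = shift_solution F {XI<..X0} \<alpha>"
    unfolding is_zsol_iff_shift_solution X0_def XI_def F_def by blast
  have z_eq: "z x y = w" if "shift_solution F {XI<..X0} \<alpha> x y w" for x y w
    unfolding z_def
    by (rule zfun_eqI) (use mono that \<open>\<alpha> > 0\<close> in \<open>simp_all add: zsol X0_def XI_def F_def\<close>)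
  have F_X0: "F X0 = 0" using strict_antimono_bij_nonneg_right_end_eq_0 mono assms(13,16) .
  have Finv: "Finv a b \<sigma> \<rho> c \<alpha> y \<in> {XI<..X0}" "F (Finv a b \<sigma> \<rho> c \<alpha> y) = y" if "0 < y" for y
    using bij_betwE[OF bij_betw_inv_into[OF assms(16)]] bij_betw_inv_into_right[OF assms(16)] that
    unfolding Finv_def XI_def[symmetric] X0_def[symmetric] F_def[symmetric] by auto
  have F_nonneg: "\<forall>u\<in>{XI<..X0}. F u \<ge> 0" using assms(16) unfolding bij_betw_def by auto
  have "(\<exists>!w. shift_solution F {XI<..X0} \<alpha> x y w) \<and>
        z x y \<in> {(x - X0) / \<alpha> <.. min ((x - XI) / \<alpha>) y}"
    if "(x, y) \<in> S2 a b \<sigma> \<rho> c \<alpha>" for x y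
  proof -
    have "0 < y" and x_ge: "x \<ge> Finv a b \<sigma> \<rho> c \<alpha> y" and "y > (x - X0) / \<alpha>"
      using that unfolding S2_def X0_def by auto
    obtain w where w: "shift_solution F {XI<..X0} \<alpha> x y w"
      using shift_solution_exists[OF assms(15) F_X0 \<open>\<alpha> > 0\<close> Finv[OF \<open>0 < y\<close>]] x_ge
        \<open>y > (x - X0) / \<alpha>\<close> by fastforce
    have "\<exists>!w. shift_solution F {XI<..X0} \<alpha> x y w"
      using w shift_solution_unique[OF mono \<open>\<alpha> > 0\<close> w] by blast
    moreover have "z x y \<in> {(x - X0) / \<alpha> <.. min ((x - XI) / \<alpha>) y}"
      using z_eq[OF w] shift_solution_bounds[OF F_nonneg F_X0 \<open>\<alpha> > 0\<close> \<open>y > (x - X0) / \<alpha>\<close> w]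
      by simp
    ultimately show ?thesis ..
  qed
  moreover have "z x (F x) = 0" if "x \<in> {XI<..<X0}" for x
    using that by (intro z_eq) (simp add: shift_solution_def)
  moreover have "z x ((x - X0) / \<alpha>) = (x - X0) / \<alpha>" if "x \<ge> X0" for x
    using that assms(13) F_X0 \<open>\<alpha> > 0\<close> by (intro z_eq) (simp add: shift_solution_def)
  ultimately show ?thesis unfolding zsol by blast
qed

end
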